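(* Let $f:\{0,1\}^r\to\{0,1\}$ satisfy $f(0,\dots,0)=1$. If $f$ contains $\mathrm{IMPL}$ as a restriction, then $f$ contains $\mathrm{IMPL}$ as a $0$-restriction.
   Context: $g:\{0,1\}^s\to\{0,1\}$ is a restriction of $f$ if there are pairwise disjoint, possibly empty, sets $X_1,\dots,X_s,Z_0,Z_1$ with union $[r]$ such that $g(x_1,\dots,x_s)=f(u)$. Here $u_i=x_j$ for $i\in X_j$, $u_i=0$ for $i\in Z_0$, and $u_i=1$ for $i\in Z_1$. It is a $0$-restriction if this holds with $Z_1=\emptyset$. $\mathrm{IMPL}(y_1,y_2)=\overline{y_1}\vee y_2$. *)

theory Defs
  imports Main
begin

text \<open>Boolean functions {0,1}^r -> {0,1} are modelled as functions on bool lists;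
  only lists of length r are meaningful. 0 = False, 1 = True.
  Coordinates are indexed 0..r-1 (i.e. [r] = {0..<r}).\<close>

definition restr_witness ::
  "nat \<Rightarrow> (bool list \<Rightarrow> bool) \<Rightarrow> nat \<Rightarrow> (bool list \<Rightarrow> bool)
   \<Rightarrow> (nat \<Rightarrow> nat set) \<Rightarrow> nat set \<Rightarrow> nat set \<Rightarrow> bool" where
  "restr_witness r f s g X Z0 Z1 \<longleftrightarrow>
     (\<forall>j<s. \<forall>k<s. j \<noteq> k \<longrightarrow> X j \<inter> X k = {}) \<and>
     (\<forall>j<s. X j \<inter> Z0 = {} \<and> X j \<inter> Z1 = {}) \<and>
     Z0 \<inter> Z1 = {} \<and>
     (\<Union>j<s. X j) \<union> Z0 \<union> Z1 = {0..<r} \<and>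
     (\<forall>x u. length x = s \<longrightarrow> length u = r \<longrightarrow>
        (\<forall>j<s. \<forall>i\<in>X j. u ! i = x ! j) \<longrightarrow>
        (\<forall>i\<in>Z0. \<not> u ! i) \<longrightarrow> (\<forall>i\<in>Z1. u ! i) \<longrightarrow>
        g x = f u)"

definition is_restriction ::
  "nat \<Rightarrow> (bool list \<Rightarrow> bool) \<Rightarrow> nat \<Rightarrow> (bool list \<Rightarrow> bool) \<Rightarrow> bool" where
  "is_restriction r f s g \<longleftrightarrow> (\<exists>X Z0 Z1. restr_witness r f s g X Z0 Z1)"

definition is_0_restriction ::
  "nat \<Rightarrow> (bool list \<Rightarrow> bool) \<Rightarrow> nat \<Rightarrow> (bool list \<Rightarrow> bool) \<Rightarrow> bool" where
  "is_0_restriction r f s g \<longleftrightarrow> (\<exists>X Z0. restr_witness r f s g X Z0 {})"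

definition IMPL :: "bool list \<Rightarrow> bool" where
  "IMPL y = (\<not> y ! 0 \<or> y ! 1)"

end

theory Submission
  imports Defs
begin

(* If IMPL arises from f by a restriction with blocks X 0, X 1 and constant blocks Z0, Z1,
   then turning Z1 into a third variable gives a 0-restriction h of f with h(a,b,1) = IMPL(a,b)
   and h(0,0,0) = f(0,...,0) = 1.  If h(0,1,0) = 1, then h(a,b,a) = IMPL(a,b): merge Z1 into the
   first block.  Otherwise h(0,a,b) = IMPL(a,b): send the first block to 0 and let Z1 carry the
   second variable.  Either way IMPL is a 0-restriction of h, and 0-restrictions compose. *)

definition restr_partition ::
  "nat \<Rightarrow> nat \<Rightarrow> (nat \<Rightarrow> nat set) \<Rightarrow> nat set \<Rightarrow> nat set \<Rightarrow> bool" where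
  "restr_partition r s X Z0 Z1 \<longleftrightarrow>
     (\<forall>j<s. \<forall>k<s. j \<noteq> k \<longrightarrow> X j \<inter> X k = {}) \<and>
     (\<forall>j<s. X j \<inter> Z0 = {} \<and> X j \<inter> Z1 = {}) \<and>
     Z0 \<inter> Z1 = {} \<and>
     (\<Union>j<s. X j) \<union> Z0 \<union> Z1 = {0..<r}"

lemma restr_partitionD:
  assumes "restr_partition r s X Z0 Z1"
  shows restr_partition_block_eq: "\<lbrakk>i \<in> X j; i \<in> X k; j < s; k < s\<rbrakk> \<Longrightarrow> j = k"
    and restr_partition_block_Z0: "\<lbrakk>i \<in> X j; j < s\<rbrakk> \<Longrightarrow> i \<notin> Z0"
    and restr_partition_block_Z1: "\<lbrakk>i \<in> X j; j < s\<rbrakk> \<Longrightarrow> i \<notin> Z1"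
    and restr_partition_Z0_Z1: "i \<in> Z0 \<Longrightarrow> i \<notin> Z1"
    and restr_partition_cover: "i < r \<longleftrightarrow> (\<exists>j<s. i \<in> X j) \<or> i \<in> Z0 \<or> i \<in> Z1"
proof -
  have *: "\<forall>j<s. \<forall>k<s. j \<noteq> k \<longrightarrow> X j \<inter> X k = {}" "\<forall>j<s. X j \<inter> Z0 = {} \<and> X j \<inter> Z1 = {}"
    "Z0 \<inter> Z1 = {}" "(\<Union>j<s. X j) \<union> Z0 \<union> Z1 = {0..<r}"
    using assms unfolding restr_partition_def by simp_all
  show "\<lbrakk>i \<in> X j; i \<in> X k; j < s; k < s\<rbrakk> \<Longrightarrow> j = k"
    using *(1) by blast
  show "\<lbrakk>i \<in> X j; j < s\<rbrakk> \<Longrightarrow> i \<notin> Z0" "\<lbrakk>i \<in> X j; j < s\<rbrakk> \<Longrightarrow> i \<notin> Z1"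
    using *(2) by blast+
  show "i \<in> Z0 \<Longrightarrow> i \<notin> Z1"
    using *(3) by blast
  have "i < r \<longleftrightarrow> i \<in> (\<Union>j<s. X j) \<union> Z0 \<union> Z1"
    unfolding *(4) by simp
  then show "i < r \<longleftrightarrow> (\<exists>j<s. i \<in> X j) \<or> i \<in> Z0 \<or> i \<in> Z1"
    by blast
qed

(* The point u of the definition of a restriction, as a function of x. *)
definition restr_point :: "nat \<Rightarrow> (nat \<Rightarrow> nat set) \<Rightarrow> nat set \<Rightarrow> bool list \<Rightarrow> bool list" where
  "restr_point r X Z1 x = map (\<lambda>i. i \<in> Z1 \<or> (\<exists>j<length x. i \<in> X j \<and> x ! j)) [0..<r]"

lemma length_restr_point [simp]: "length (restr_point r X Z1 x) = r"
  by (simp add: restr_point_def)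

lemma nth_restr_point:
  "i < r \<Longrightarrow> restr_point r X Z1 x ! i \<longleftrightarrow> i \<in> Z1 \<or> (\<exists>j<length x. i \<in> X j \<and> x ! j)"
  by (simp add: restr_point_def)

lemma restr_point_block:
  assumes part: "restr_partition r (length x) X Z0 Z1" and "j < length x" "i \<in> X j"
  shows "restr_point r X Z1 x ! i = x ! j"
proof -
  have "i < r" "i \<notin> Z1"
    using assms restr_partition_cover restr_partition_block_Z1 by blast+
  moreover have "\<And>k. k < length x \<Longrightarrow> i \<in> X k \<longleftrightarrow> k = j"
    using assms restr_partition_block_eq by blast
  ultimately show ?thesis
    using assms(2) by (auto simp: nth_restr_point)
qed

lemma restr_point_Z0:
  assumes part: "restr_partition r (length x) X Z0 Z1" and "i \<in> Z0"
  shows "\<not> restr_point r X Z1 x ! i"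
proof -
  have "i < r"
    using assms restr_partition_cover by blast
  then show ?thesis
    using assms restr_partition_block_Z0[OF part] restr_partition_Z0_Z1[OF part]
    by (auto simp: nth_restr_point)
qed

lemma restr_point_Z1:
  assumes part: "restr_partition r (length x) X Z0 Z1" and "i \<in> Z1"
  shows "restr_point r X Z1 x ! i"
proof -
  have "i < r"
    using assms restr_partition_cover by blast
  then show ?thesis
    using assms(2) by (simp add: nth_restr_point)
qed

lemma eq_restr_point_iff:
  assumes part: "restr_partition r (length x) X Z0 Z1" and "length u = r"
  shows "(\<forall>j<length x. \<forall>i\<in>X j. u ! i = x ! j) \<and> (\<forall>i\<in>Z0. \<not> u ! i) \<and> (\<forall>i\<in>Z1. u ! i)
    \<longleftrightarrow> u = restr_point r X Z1 x"
proof (intro iffI)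
  assume "(\<forall>j<length x. \<forall>i\<in>X j. u ! i = x ! j) \<and> (\<forall>i\<in>Z0. \<not> u ! i) \<and> (\<forall>i\<in>Z1. u ! i)"
  then have blocks: "\<And>j i. j < length x \<Longrightarrow> i \<in> X j \<Longrightarrow> u ! i = x ! j"
    and zeros: "\<And>i. i \<in> Z0 \<Longrightarrow> \<not> u ! i" and ones: "\<And>i. i \<in> Z1 \<Longrightarrow> u ! i"
    by blast+
  show "u = restr_point r X Z1 x"
  proof (rule nth_equalityI)
    fix i assume "i < length u"
    then consider j where "j < length x" "i \<in> X j" | "i \<in> Z0" | "i \<in> Z1"
      using restr_partition_cover[OF part] \<open>length u = r\<close> by blast
    then show "u ! i = restr_point r X Z1 x ! i"
      by cases (use blocks zeros ones restr_point_block[OF part] restr_point_Z0[OF part]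
          restr_point_Z1[OF part] in metis)+
  qed (simp add: \<open>length u = r\<close>)
next
  assume "u = restr_point r X Z1 x"
  then show "(\<forall>j<length x. \<forall>i\<in>X j. u ! i = x ! j) \<and> (\<forall>i\<in>Z0. \<not> u ! i) \<and> (\<forall>i\<in>Z1. u ! i)"
    using restr_point_block[OF part] restr_point_Z0[OF part] restr_point_Z1[OF part] by simp
qed

lemma restr_witness_iff:
  "restr_witness r f s g X Z0 Z1 \<longleftrightarrow>
     restr_partition r s X Z0 Z1 \<and> (\<forall>x. length x = s \<longrightarrow> g x = f (restr_point r X Z1 x))"
proof -
  have "restr_witness r f s g X Z0 Z1 \<longleftrightarrow> restr_partition r s X Z0 Z1 \<and>
     (\<forall>x u. length x = s \<longrightarrow> length u = r \<longrightarrow>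
        (\<forall>j<s. \<forall>i\<in>X j. u ! i = x ! j) \<longrightarrow> (\<forall>i\<in>Z0. \<not> u ! i) \<longrightarrow> (\<forall>i\<in>Z1. u ! i) \<longrightarrow>
        g x = f u)"
    unfolding restr_witness_def restr_partition_def by (simp only: conj_assoc)
  also have "\<dots> \<longleftrightarrow> restr_partition r s X Z0 Z1 \<and>
     (\<forall>x. length x = s \<longrightarrow> g x = f (restr_point r X Z1 x))"
  proof (rule conj_cong[OF refl])
    assume part: "restr_partition r s X Z0 Z1"
    show "(\<forall>x u. length x = s \<longrightarrow> length u = r \<longrightarrow>
        (\<forall>j<s. \<forall>i\<in>X j. u ! i = x ! j) \<longrightarrow> (\<forall>i\<in>Z0. \<not> u ! i) \<longrightarrow> (\<forall>i\<in>Z1. u ! i) \<longrightarrow>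
        g x = f u) \<longleftrightarrow> (\<forall>x. length x = s \<longrightarrow> g x = f (restr_point r X Z1 x))"
    proof (rule iffI; intro allI impI)
      fix x :: "bool list"
      assume "\<forall>x u. length x = s \<longrightarrow> length u = r \<longrightarrow>
        (\<forall>j<s. \<forall>i\<in>X j. u ! i = x ! j) \<longrightarrow> (\<forall>i\<in>Z0. \<not> u ! i) \<longrightarrow> (\<forall>i\<in>Z1. u ! i) \<longrightarrow>
        g x = f u" and "length x = s"
      then show "g x = f (restr_point r X Z1 x)"
        using eq_restr_point_iff[of r x X Z0 Z1 "restr_point r X Z1 x"] part by simp
    next
      fix x u :: "bool list"
      assume "\<forall>x. length x = s \<longrightarrow> g x = f (restr_point r X Z1 x)" and "length x = s" "length u = r"
        and "\<forall>j<s. \<forall>i\<in>X j. u ! i = x ! j" "\<forall>i\<in>Z0. \<not> u ! i" "\<forall>i\<in>Z1. u ! i"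
      then show "g x = f u"
        using eq_restr_point_iff[of r x X Z0 Z1 u] part by simp
    qed
  qed
  finally show ?thesis .
qed

lemma restr_partition_trans:
  assumes X: "restr_partition r s X Z0 Z1" and Y: "restr_partition s t Y W0 W1"
  shows "restr_partition r t (\<lambda>j. \<Union>k\<in>Y j. X k) (Z0 \<union> (\<Union>k\<in>W0. X k)) (Z1 \<union> (\<Union>k\<in>W1. X k))"
proof -
  have Y_less: "k < s" if "k \<in> Y j" "j < t" for j k
    using that restr_partition_cover[OF Y] by blast
  have W_less: "k < s" if "k \<in> W0 \<or> k \<in> W1" for k
    using that restr_partition_cover[OF Y] by blast
  have X_eq: "k = k'" if "i \<in> X k" "i \<in> X k'" "k < s" "k' < s" for i k k'
    using restr_partition_block_eq[OF X that] .
  show ?thesis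
    unfolding restr_partition_def disjoint_iff
  proof (intro conjI allI impI ballI)
    fix j j' i assume "j < t" "j' < t" "j \<noteq> j'" "i \<in> (\<Union>k\<in>Y j. X k)"
    then obtain k where "k \<in> Y j" "i \<in> X k" by blast
    show "i \<notin> (\<Union>k\<in>Y j'. X k)"
    proof
      assume "i \<in> (\<Union>k\<in>Y j'. X k)"
      then obtain k' where "k' \<in> Y j'" "i \<in> X k'" by blast
      then have "k = k'"
        using X_eq Y_less \<open>i \<in> X k\<close> \<open>k \<in> Y j\<close> \<open>j < t\<close> \<open>j' < t\<close> by blast
      then show False
        using restr_partition_block_eq[OF Y] \<open>k \<in> Y j\<close> \<open>k' \<in> Y j'\<close> \<open>j < t\<close> \<open>j' < t\<close> \<open>j \<noteq> j'\<close>
        by blast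
    qed
  next
    fix j i assume "j < t" "i \<in> (\<Union>k\<in>Y j. X k)"
    then obtain k where k: "k \<in> Y j" "i \<in> X k" "k < s" using Y_less by blast
    show "i \<notin> Z0 \<union> (\<Union>k\<in>W0. X k)" "i \<notin> Z1 \<union> (\<Union>k\<in>W1. X k)"
      using k \<open>j < t\<close> X_eq W_less restr_partition_block_Z0[OF X] restr_partition_block_Z1[OF X]
        restr_partition_block_Z0[OF Y] restr_partition_block_Z1[OF Y] by blast+
  next
    fix i assume "i \<in> Z0 \<union> (\<Union>k\<in>W0. X k)"
    then show "i \<notin> Z1 \<union> (\<Union>k\<in>W1. X k)"
      using X_eq W_less restr_partition_block_Z0[OF X] restr_partition_block_Z1[OF X]
        restr_partition_Z0_Z1[OF X] restr_partition_Z0_Z1[OF Y] by blast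
  next
    show "(\<Union>j<t. \<Union>k\<in>Y j. X k) \<union> (Z0 \<union> (\<Union>k\<in>W0. X k)) \<union> (Z1 \<union> (\<Union>k\<in>W1. X k)) = {0..<r}"
    proof (intro set_eqI iffI)
      fix i assume "i \<in> (\<Union>j<t. \<Union>k\<in>Y j. X k) \<union> (Z0 \<union> (\<Union>k\<in>W0. X k)) \<union> (Z1 \<union> (\<Union>k\<in>W1. X k))"
      then have "i \<in> Z0 \<or> i \<in> Z1 \<or> (\<exists>k<s. i \<in> X k)"
        using Y_less W_less by blast
      then show "i \<in> {0..<r}"
        using restr_partition_cover[OF X] by auto
    next
      fix i assume "i \<in> {0..<r}"
      then consider k where "k < s" "i \<in> X k" | "i \<in> Z0" | "i \<in> Z1"
        using restr_partition_cover[OF X] by auto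
      then show "i \<in> (\<Union>j<t. \<Union>k\<in>Y j. X k) \<union> (Z0 \<union> (\<Union>k\<in>W0. X k)) \<union> (Z1 \<union> (\<Union>k\<in>W1. X k))"
      proof cases
        case (1 k)
        then consider j where "j < t" "k \<in> Y j" | "k \<in> W0" | "k \<in> W1"
          using restr_partition_cover[OF Y] by auto
        then show ?thesis
          using \<open>i \<in> X k\<close> by cases blast+
      qed blast+
    qed
  qed
qed

lemma restr_point_trans:
  assumes Y: "restr_partition s (length x) Y W0 W1"
  shows "restr_point r X Z1 (restr_point s Y W1 x)
    = restr_point r (\<lambda>j. \<Union>k\<in>Y j. X k) (Z1 \<union> (\<Union>k\<in>W1. X k)) x"
proof (rule nth_equalityI)
  fix i assume "i < length (restr_point r X Z1 (restr_point s Y W1 x))"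
  then have "i < r" by simp
  have "k < s" if "k \<in> W1 \<or> (\<exists>j<length x. k \<in> Y j)" for k
    using that restr_partition_cover[OF Y] by blast
  then have "(\<exists>k<s. i \<in> X k \<and> (k \<in> W1 \<or> (\<exists>j<length x. k \<in> Y j \<and> x ! j)))
      \<longleftrightarrow> (\<exists>k\<in>W1. i \<in> X k) \<or> (\<exists>j<length x. (\<exists>k\<in>Y j. i \<in> X k) \<and> x ! j)"
    by blast
  moreover have "restr_point s Y W1 x ! k \<longleftrightarrow> k \<in> W1 \<or> (\<exists>j<length x. k \<in> Y j \<and> x ! j)"
    if "k < s" for k
    using that by (rule nth_restr_point)
  ultimately show "restr_point r X Z1 (restr_point s Y W1 x) ! i
      = restr_point r (\<lambda>j. \<Union>k\<in>Y j. X k) (Z1 \<union> (\<Union>k\<in>W1. X k)) x ! i"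
    using \<open>i < r\<close> by (simp add: nth_restr_point cong: conj_cong)
qed simp

lemma restr_witness_trans:
  assumes "restr_witness r f s g X Z0 Z1" and "restr_witness s g t h Y W0 W1"
  shows "restr_witness r f t h (\<lambda>j. \<Union>k\<in>Y j. X k) (Z0 \<union> (\<Union>k\<in>W0. X k)) (Z1 \<union> (\<Union>k\<in>W1. X k))"
proof -
  have X: "restr_partition r s X Z0 Z1" and f_g: "\<And>y. length y = s \<Longrightarrow> g y = f (restr_point r X Z1 y)"
    and Y: "restr_partition s t Y W0 W1" and g_h: "\<And>x. length x = t \<Longrightarrow> h x = g (restr_point s Y W1 x)"
    using assms by (simp_all add: restr_witness_iff)
  have "h x = f (restr_point r (\<lambda>j. \<Union>k\<in>Y j. X k) (Z1 \<union> (\<Union>k\<in>W1. X k)) x)" if "length x = t" for x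
    using g_h[OF that] f_g[of "restr_point s Y W1 x"] restr_point_trans[of s x Y W0 W1 r X Z1] Y that
    by simp
  then show ?thesis
    using restr_partition_trans[OF X Y] by (simp add: restr_witness_iff)
qed

lemma is_0_restriction_trans:
  assumes "is_0_restriction r f s g" and "is_0_restriction s g t h"
  shows "is_0_restriction r f t h"
proof -
  obtain X Z0 Y W0 where "restr_witness r f s g X Z0 {}" "restr_witness s g t h Y W0 {}"
    using assms unfolding is_0_restriction_def by blast
  from restr_witness_trans[OF this] show ?thesis
    unfolding is_0_restriction_def by auto
qed

lemma restr_point_snoc:
  "restr_point r (X(length x := A)) Z (x @ [b]) = restr_point r X (if b then Z \<union> A else Z) x"
proof -
  have "(\<exists>j<Suc (length x). i \<in> (X(length x := A)) j \<and> (x @ [b]) ! j)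
      \<longleftrightarrow> (i \<in> A \<and> b) \<or> (\<exists>j<length x. i \<in> X j \<and> x ! j)" for i
    by (auto simp: Ex_less_Suc nth_append)
  then show ?thesis
    by (auto simp: restr_point_def)
qed

lemma restr_point_Cons:
  "restr_point r X Z (b # x) = restr_point r (\<lambda>j. X (Suc j)) (if b then Z \<union> X 0 else Z) x"
  by (auto simp: restr_point_def Ex_less_Suc2)

lemma restr_point_Nil: "restr_point r X Z [] = map (\<lambda>i. i \<in> Z) [0..<r]"
  by (simp add: restr_point_def)

lemma restr_point_replicate_False: "restr_point r X {} (replicate n False) = replicate r False"
  by (simp add: restr_point_def map_replicate_const cong: conj_cong)

lemma restr_partition_ones_to_block:
  assumes "restr_partition r s X Z0 Z1"
  shows "restr_partition r (Suc s) (X(s := Z1)) Z0 {}"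
proof -
  have "(\<Union>j<Suc s. (X(s := Z1)) j) = (\<Union>j<s. X j) \<union> Z1"
    by (auto simp: lessThan_Suc)
  then show ?thesis
    using assms unfolding restr_partition_def by (auto simp: less_Suc_eq)
qed

lemma restr_witness_ones_to_variable:
  assumes "restr_witness r f s g X Z0 Z1"
  shows "restr_witness r f (Suc s) (\<lambda>x. f (restr_point r (X(s := Z1)) {} x)) (X(s := Z1)) Z0 {}"
    and "length x = s \<Longrightarrow> f (restr_point r (X(s := Z1)) {} (x @ [True])) = g x"
  using assms restr_partition_ones_to_block restr_point_snoc[of r X x Z1 "{}" True]
  by (auto simp: restr_witness_iff)

lemma is_0_restriction_2I:
  assumes "restr_partition r 2 ((!) [A, B]) Z0 {}"
    and "\<And>a b. g [a, b] = f (restr_point r ((!) [A, B]) {} [a, b])"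
  shows "is_0_restriction r f 2 g"
proof -
  have "g x = f (restr_point r ((!) [A, B]) {} x)" if "length x = 2" for x
  proof -
    have "x = [x ! 0, x ! 1]"
      using that by (intro nth_equalityI) (auto simp: less_2_cases_iff)
    then show ?thesis
      using assms(2) by metis
  qed
  then show ?thesis
    using assms(1) unfolding is_0_restriction_def restr_witness_iff by blast
qed

lemma IMPL_0_restriction_of_ternary:
  assumes zero: "h [False, False, False]" and one: "\<And>a b. h [a, b, True] = IMPL [a, b]"
  shows "is_0_restriction 3 h 2 IMPL"
proof (cases "h [False, True, False]")
  case True
  show ?thesis
  proof (rule is_0_restriction_2I)
    show "restr_partition 3 2 ((!) [{0, 2}, {1}]) {} {}"
      by (auto simp: restr_partition_def All_less_Suc lessThan_Suc numeral_2_eq_2)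
    show "IMPL [a, b] = h (restr_point 3 ((!) [{0, 2}, {1}]) {} [a, b])" for a b
      using zero one True
      by (cases a; cases b) (simp_all add: restr_point_Cons restr_point_Nil numeral_3_eq_3 IMPL_def)
  qed
next
  case False
  show ?thesis
  proof (rule is_0_restriction_2I)
    show "restr_partition 3 2 ((!) [{1}, {2}]) {0} {}"
      by (auto simp: restr_partition_def All_less_Suc lessThan_Suc numeral_2_eq_2)
    show "IMPL [a, b] = h (restr_point 3 ((!) [{1}, {2}]) {} [a, b])" for a b
      using zero one False
      by (cases a; cases b) (simp_all add: restr_point_Cons restr_point_Nil numeral_3_eq_3 IMPL_def)
  qed
qed

theorem mainTheorem13:
  fixes r :: nat and f :: "bool list \<Rightarrow> bool"
  assumes "f (replicate r False)"
    and "is_restriction r f 2 IMPL"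
  shows "is_0_restriction r f 2 IMPL"
proof -
  obtain X Z0 Z1 where w: "restr_witness r f 2 IMPL X Z0 Z1"
    using assms(2) unfolding is_restriction_def by blast
  define h where "h = (\<lambda>x. f (restr_point r (X(2 := Z1)) {} x))"
  have "restr_witness r f 3 h (X(2 := Z1)) Z0 {}"
    using restr_witness_ones_to_variable(1)[OF w] by (simp add: h_def numeral_3_eq_3)
  then have "is_0_restriction r f 3 h"
    unfolding is_0_restriction_def by blast
  moreover have "is_0_restriction 3 h 2 IMPL"
  proof (rule IMPL_0_restriction_of_ternary)
    show "h [False, False, False]"
      using assms(1) restr_point_replicate_False[of r _ 3]
      by (simp add: h_def numeral_3_eq_3)
    show "h [a, b, True] = IMPL [a, b]" for a b
      using restr_witness_ones_to_variable(2)[OF w, of "[a, b]"] by (simp add: h_def)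
  qed
  ultimately show ?thesis
    by (rule is_0_restriction_trans)
qed

end
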